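(* Let $G_1$ and $G_2$ be two disjoint $(k+1)$-critical hypergraphs with $k\ge2$, let $\tilde e\in E(G_1)$ be an ordinary edge (i.e. $|\tilde e|=2$), let $\tilde v\in V(G_2)$ be arbitrary, and let $s$ be an admissible map for $(\tilde e,G_2,\tilde v)$. Let $G=S(G_1,\tilde e,G_2,\tilde v,s)$ and $G_2'=G[(V(G_2)\setminus\{\tilde v\})\cup\tilde e]$. If $\chi(G_2')\le k$, then $G$ is $(k+1)$-critical and $\tilde e$ is a separating vertex set of $G$ of size $2$.
   Context: A hypergraph is a pair $G=(V,E)$ of finite sets with $E\subseteq 2^V$ and $|e|\ge2$ for all $e\in E$. A coloring requires every edge to contain two vertices of different colors; $\chi$ is the chromatic number. $G$ is $(k+1)$-critical if $\chi(G)=k+1$ but $\chi(H)\le k$ for every proper subhypergraph $H$. $G[X]$ has vertex set $X$ and the edges of $G$ contained in $X$. $\partial_G(v)$ is the set of edges containing $v$. A set $S\subseteq V(G)$ is a separating vertex set if $G$ is the union of two induced subhypergraphs $G_1,G_2$ with $V(G_1)\cap V(G_2)=S$ and $|V(G_i)|>|S|$. Splitting: let $G_1,G_2$ be disjoint hypergraphs, $\tilde e\in E(G_1)$, $\tilde v\in V(G_2)$, and $s:\partial_{G_2}(\tilde v)\to 2^{\tilde e}$ a map (called admissible) with $s(e)\ne\varnothing$ for all $e$ and $\bigcup_{e}s(e)=\tilde e$. Then $S(G_1,\tilde e,G_2,\tilde v,s)$ is the hypergraph with vertex set $V(G_1)\cup(V(G_2)\setminus\{\tilde v\})$ and edge set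 $(E(G_1)\setminus\{\tilde e\})\cup(E(G_2)\setminus\partial_{G_2}(\tilde v))\cup\{(e\setminus\{\tilde v\})\cup s(e): e\in\partial_{G_2}(\tilde v)\}$. *)

theory Defs
  imports Main
begin

type_synonym 'a hypergraph = "'a set \<times> 'a set set"

abbreviation verts :: "'a hypergraph \<Rightarrow> 'a set" where "verts G \<equiv> fst G"
abbreviation edges :: "'a hypergraph \<Rightarrow> 'a set set" where "edges G \<equiv> snd G"

definition hypergraph :: "'a hypergraph \<Rightarrow> bool" where
  "hypergraph G \<longleftrightarrow> finite (verts G) \<and> edges G \<subseteq> Pow (verts G)
     \<and> (\<forall>e\<in>edges G. card e \<ge> 2)"

definition colorable :: "'a hypergraph \<Rightarrow> nat \<Rightarrow> bool" where
  "colorable G k \<longleftrightarrow> (\<exists>f :: 'a \<Rightarrow> nat. (\<forall>v\<in>verts G. f v < k)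
     \<and> (\<forall>e\<in>edges G. \<exists>u\<in>e. \<exists>w\<in>e. f u \<noteq> f w))"

definition chi :: "'a hypergraph \<Rightarrow> nat" where
  "chi G = (LEAST k. colorable G k)"

definition subhypergraph :: "'a hypergraph \<Rightarrow> 'a hypergraph \<Rightarrow> bool" where
  "subhypergraph H G \<longleftrightarrow> hypergraph H \<and> verts H \<subseteq> verts G \<and> edges H \<subseteq> edges G"

definition critical :: "nat \<Rightarrow> 'a hypergraph \<Rightarrow> bool" where
  "critical m G \<longleftrightarrow> hypergraph G \<and> chi G = m
     \<and> (\<forall>H. subhypergraph H G \<and> H \<noteq> G \<longrightarrow> chi H < m)"

definition induced :: "'a hypergraph \<Rightarrow> 'a set \<Rightarrow> 'a hypergraph" where
  "induced G X = (X, {e\<in>edges G. e \<subseteq> X})"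

definition separating :: "'a hypergraph \<Rightarrow> 'a set \<Rightarrow> bool" where
  "separating G S \<longleftrightarrow> (\<exists>X Y. X \<subseteq> verts G \<and> Y \<subseteq> verts G
      \<and> verts G = X \<union> Y \<and> edges G = edges (induced G X) \<union> edges (induced G Y)
      \<and> X \<inter> Y = S \<and> card X > card S \<and> card Y > card S)"

definition incident :: "'a hypergraph \<Rightarrow> 'a \<Rightarrow> 'a set set" where
  "incident G v = {e\<in>edges G. v \<in> e}"

definition admissible :: "'a set \<Rightarrow> 'a hypergraph \<Rightarrow> 'a \<Rightarrow> ('a set \<Rightarrow> 'a set) \<Rightarrow> bool" where
  "admissible et G2 v s \<longleftrightarrow> (\<forall>e\<in>incident G2 v. s e \<subseteq> et \<and> s e \<noteq> {})
      \<and> (\<Union>e\<in>incident G2 v. s e) = et"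

definition splitting :: "'a hypergraph \<Rightarrow> 'a set \<Rightarrow> 'a hypergraph \<Rightarrow> 'a \<Rightarrow> ('a set \<Rightarrow> 'a set)
    \<Rightarrow> 'a hypergraph" where
  "splitting G1 et G2 v s =
    (verts G1 \<union> (verts G2 - {v}),
     (edges G1 - {et}) \<union> (edges G2 - incident G2 v)
       \<union> {(e - {v}) \<union> s e | e. e \<in> incident G2 v})"

end

theory Submission
  imports Defs "HOL-Combinatorics.Transposition"
begin

text \<open>
  A \<open>k\<close>-colouring of \<open>G\<close> colours \<open>G1\<close> minus \<open>et\<close>, so it is constant on \<open>et\<close> because \<open>G1\<close> is
  not \<open>k\<close>-colourable; contracting \<open>et\<close> back onto \<open>v\<close> then yields a \<open>k\<close>-colouring of \<open>G2\<close>.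
  Conversely, deleting any edge of \<open>G\<close> makes it \<open>k\<close>-colourable. For an edge of \<open>G1\<close>, glue a
  colouring of \<open>G1\<close> minus that edge to a colouring of \<open>G2'\<close>, permuting colours so that they agree
  on \<open>et\<close>: both give the two ends of \<open>et\<close> distinct colours, which is where \<open>card et = 2\<close> and
  \<open>\<chi>(G2') \<le> k\<close> are used. For an edge coming from \<open>G2\<close>, glue a colouring of \<open>G1\<close> minus
  \<open>et\<close> (constant on \<open>et\<close>) to a colouring of \<open>G2\<close> minus the original edge in which the colour
  of \<open>v\<close> is spread over \<open>et\<close>. As \<open>G\<close> has no isolated vertices, it is \<open>(k+1)\<close>-critical, and
  \<open>V(G1)\<close> and \<open>V(G2')\<close> cover \<open>G\<close> and meet exactly in \<open>et\<close>.
\<close>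

definition monochromatic :: "('a \<Rightarrow> 'b) \<Rightarrow> 'a set \<Rightarrow> bool" where
  "monochromatic f e \<longleftrightarrow> (\<forall>x\<in>e. \<forall>y\<in>e. f x = f y)"

definition is_coloring :: "'a hypergraph \<Rightarrow> nat \<Rightarrow> ('a \<Rightarrow> nat) \<Rightarrow> bool" where
  "is_coloring G k f \<longleftrightarrow> (\<forall>x\<in>verts G. f x < k) \<and> (\<forall>e\<in>edges G. \<not> monochromatic f e)"

lemma colorable_iff_is_coloring: "colorable G k \<longleftrightarrow> (\<exists>f. is_coloring G k f)"
  by (simp add: colorable_def is_coloring_def monochromatic_def)

lemma monochromatic_cong: "(\<And>x. x \<in> e \<Longrightarrow> f x = g x) \<Longrightarrow> monochromatic f e \<longleftrightarrow> monochromatic g e"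
  unfolding monochromatic_def by auto

lemma monochromatic_comp: "monochromatic (f \<circ> g) e \<longleftrightarrow> monochromatic f (g ` e)"
  unfolding monochromatic_def by auto

lemma monochromatic_comp_inj: "inj \<pi> \<Longrightarrow> monochromatic (\<pi> \<circ> f) e \<longleftrightarrow> monochromatic f e"
  unfolding monochromatic_def by (simp add: inj_eq)

lemma monochromatic_doubleton: "monochromatic f {a, b} \<longleftrightarrow> f a = f b"
  unfolding monochromatic_def by auto

lemma card_ge_2_obtain:
  assumes "2 \<le> card e" obtains x y where "x \<in> e" "y \<in> e" "x \<noteq> y"
proof -
  have "finite e" using assms by (metis card.infinite not_numeral_le_zero)
  then show ?thesis using assms that by (metis card_le_Suc0_iff_eq not_less_eq_eq numeral_2_eq_2)
qed

lemma is_coloring_mono: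
  "is_coloring G k f \<Longrightarrow> verts H \<subseteq> verts G \<Longrightarrow> edges H \<subseteq> edges G \<Longrightarrow> is_coloring H k f"
  unfolding is_coloring_def by blast

lemma is_coloring_relabel:
  assumes "is_coloring G k f" "inj \<pi>" "\<pi> ` {..<k} \<subseteq> {..<k}"
  shows "is_coloring G k (\<pi> \<circ> f)"
  using assms unfolding is_coloring_def by (auto simp: monochromatic_comp_inj)

lemma is_coloring_Un:
  assumes "is_coloring (X, E) k f" "is_coloring (Y, F) k g"
    and "E \<subseteq> Pow X" "F \<subseteq> Pow Y" "\<forall>x\<in>X \<inter> Y. f x = g x"
  shows "is_coloring (X \<union> Y, E \<union> F) k (\<lambda>x. if x \<in> X then f x else g x)"
  unfolding is_coloring_def
proof (intro conjI ballI)
  fix x assume "x \<in> verts (X \<union> Y, E \<union> F)"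
  then show "(if x \<in> X then f x else g x) < k" using assms(1,2) by (auto simp: is_coloring_def)
next
  fix e assume "e \<in> edges (X \<union> Y, E \<union> F)"
  then consider "e \<in> E" "e \<subseteq> X" | "e \<in> F" "e \<subseteq> Y" using assms(3,4) by auto
  then show "\<not> monochromatic (\<lambda>x. if x \<in> X then f x else g x) e"
  proof cases
    case 1
    then have "monochromatic (\<lambda>x. if x \<in> X then f x else g x) e \<longleftrightarrow> monochromatic f e"
      by (intro monochromatic_cong) auto
    then show ?thesis using 1 assms(1) by (auto simp: is_coloring_def)
  next
    case 2
    then have "monochromatic (\<lambda>x. if x \<in> X then f x else g x) e \<longleftrightarrow> monochromatic g e"
      using assms(5) by (intro monochromatic_cong) auto
    then show ?thesis using 2 assms(2) by (auto simp: is_coloring_def)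
  qed
qed

lemma exists_color_transposition:
  assumes "a < k" "b < k"
  obtains \<pi> :: "nat \<Rightarrow> nat" where "inj \<pi>" "\<pi> ` {..<k} \<subseteq> {..<k}" "\<pi> a = b"
  using assms by (intro that[of "transpose a b"]) (auto simp: inj_transpose)

lemma exists_color_permutation:
  assumes "a < k" "b < k" "a' < k" "b' < k" "a \<noteq> b" "a' \<noteq> b'"
  obtains \<pi> :: "nat \<Rightarrow> nat" where "inj \<pi>" "\<pi> ` {..<k} \<subseteq> {..<k}" "\<pi> a = a'" "\<pi> b = b'"
proof -
  define c where "c = transpose a a' b"
  have "c \<noteq> a'" unfolding c_def using assms(5) by (simp add: transpose_def)
  have "c < k" unfolding c_def using assms by (simp add: transpose_def)
  show ?thesis
  proof (rule that[of "transpose c b' \<circ> transpose a a'"])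
    show "inj (transpose c b' \<circ> transpose a a')" by (simp add: inj_compose inj_transpose)
    show "(transpose c b' \<circ> transpose a a') ` {..<k} \<subseteq> {..<k}"
      using assms \<open>c < k\<close> by (auto simp: transpose_def)
    show "(transpose c b' \<circ> transpose a a') a = a'" using \<open>c \<noteq> a'\<close> assms(6) by simp
    show "(transpose c b' \<circ> transpose a a') b = b'" by (simp add: c_def)
  qed
qed

lemma colorable_card_verts:
  assumes "hypergraph G" shows "colorable G (card (verts G))"
proof -
  have fin: "finite (verts G)" using assms by (simp add: hypergraph_def)
  obtain f where f: "bij_betw f (verts G) {..<card (verts G)}"
    using ex_bij_betw_finite_nat[OF fin] atLeast0LessThan by metis
  have "is_coloring G (card (verts G)) f" unfolding is_coloring_def
  proof (intro conjI ballI)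
    fix e assume e: "e \<in> edges G"
    then have "e \<subseteq> verts G" "card e \<ge> 2" using assms by (auto simp: hypergraph_def)
    then obtain x y where "x \<in> e" "y \<in> e" "x \<noteq> y" by (auto elim: card_ge_2_obtain)
    then show "\<not> monochromatic f e"
      using f \<open>e \<subseteq> verts G\<close> unfolding monochromatic_def bij_betw_def by (meson inj_onD subsetD)
  qed (use f in \<open>auto dest: bij_betwE\<close>)
  then show ?thesis by (auto simp: colorable_iff_is_coloring)
qed

lemma colorable_mono: "colorable G n \<Longrightarrow> n \<le> m \<Longrightarrow> colorable G m"
  unfolding colorable_def by (blast intro: less_le_trans)

lemma colorable_if_chi_le:
  assumes "hypergraph G" "chi G \<le> k" shows "colorable G k"
proof -
  have "colorable G (chi G)"
    unfolding chi_def by (rule LeastI) (rule colorable_card_verts[OF assms(1)])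
  then show ?thesis using assms(2) by (rule colorable_mono)
qed

lemma chi_eq_Suc:
  assumes "colorable G (k + 1)" "\<not> colorable G k" shows "chi G = k + 1"
  unfolding chi_def
proof (rule Least_equality)
  show "\<And>m. colorable G m \<Longrightarrow> k + 1 \<le> m"
    using assms(2) by (metis colorable_mono not_less_eq_eq Suc_eq_plus1)
qed (fact assms(1))

lemma critical_not_colorable:
  assumes "critical (k + 1) G" shows "\<not> colorable G k"
proof
  assume "colorable G k"
  then have "chi G \<le> k" unfolding chi_def by (rule Least_le)
  then show False using assms by (simp add: critical_def)
qed

lemma critical_proper_colorable:
  assumes "critical (k + 1) G" "subhypergraph H G" "H \<noteq> G" shows "colorable H k"
proof -
  have "chi H < k + 1" using assms unfolding critical_def by blast
  then show ?thesis using assms(2) by (auto simp: subhypergraph_def intro: colorable_if_chi_le)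
qed

lemma critical_delete_edge_colorable:
  assumes "critical (k + 1) G" "e \<in> edges G" shows "colorable (verts G, edges G - {e}) k"
proof (rule critical_proper_colorable[OF assms(1)])
  show "subhypergraph (verts G, edges G - {e}) G"
    using assms(1) by (auto simp: critical_def subhypergraph_def hypergraph_def)
  show "(verts G, edges G - {e}) \<noteq> G" using assms(2) by (metis Diff_iff singletonI snd_conv)
qed

lemma critical_no_isolated:
  assumes "critical (k + 1) G" "k \<ge> 1" "x \<in> verts G" shows "\<exists>e\<in>edges G. x \<in> e"
proof (rule ccontr)
  assume isolated: "\<not> (\<exists>e\<in>edges G. x \<in> e)"
  let ?H = "(verts G - {x}, edges G)"
  have "subhypergraph ?H G"
    using assms(1) isolated by (auto simp: critical_def subhypergraph_def hypergraph_def)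
  moreover have "?H \<noteq> G" using assms(3) by (metis Diff_iff fst_conv singletonI)
  ultimately obtain f where f: "is_coloring ?H k f"
    using critical_proper_colorable[OF assms(1)] by (auto simp: colorable_iff_is_coloring)
  have "is_coloring G k (f(x := 0))"
    unfolding is_coloring_def
  proof (intro conjI ballI)
    fix e assume "e \<in> edges G"
    moreover have "monochromatic (f(x := 0)) e \<longleftrightarrow> monochromatic f e"
      using isolated \<open>e \<in> edges G\<close> by (intro monochromatic_cong) auto
    ultimately show "\<not> monochromatic (f(x := 0)) e" using f by (simp add: is_coloring_def)
  qed (use f assms(2) in \<open>auto simp: is_coloring_def\<close>)
  then show False using critical_not_colorable[OF assms(1)] by (auto simp: colorable_iff_is_coloring)
qed

lemma critical_card_verts:
  assumes "critical (k + 1) G" shows "k + 1 \<le> card (verts G)"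
proof (rule ccontr)
  assume "\<not> k + 1 \<le> card (verts G)"
  then have "card (verts G) \<le> k" by simp
  moreover have "colorable G (card (verts G))"
    using assms by (simp add: critical_def colorable_card_verts)
  ultimately have "colorable G k" by (rule colorable_mono[rotated])
  then show False using critical_not_colorable[OF assms] by blast
qed

lemma monochromatic_deleted_edge:
  "\<not> colorable G k \<Longrightarrow> is_coloring (verts G, edges G - {e}) k f \<Longrightarrow> monochromatic f e"
  unfolding colorable_iff_is_coloring is_coloring_def by auto

lemma colorable_Suc_if_delete_edge:
  assumes "hypergraph G" "e \<in> edges G" "colorable (verts G, edges G - {e}) k"
  shows "colorable G (k + 1)"
proof -
  obtain f where f: "is_coloring (verts G, edges G - {e}) k f"
    using assms(3) by (auto simp: colorable_iff_is_coloring)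
  have "e \<subseteq> verts G" "card e \<ge> 2" using assms(1,2) by (auto simp: hypergraph_def)
  then obtain u w where uw: "u \<in> e" "w \<in> e" "u \<noteq> w" by (metis card_ge_2_obtain)
  then have "f w < k" using f \<open>e \<subseteq> verts G\<close> by (auto simp: is_coloring_def)
  have "is_coloring G (k + 1) (f(u := k))"
    unfolding is_coloring_def
  proof (intro conjI ballI)
    fix e' assume e': "e' \<in> edges G"
    show "\<not> monochromatic (f(u := k)) e'"
    proof (cases "e' = e")
      case True
      then show ?thesis using uw \<open>f w < k\<close> unfolding monochromatic_def by fastforce
    next
      case False
      then have "\<not> monochromatic f e'" using f e' by (simp add: is_coloring_def)
      then obtain p q where pq: "p \<in> e'" "q \<in> e'" "f p \<noteq> f q"
        unfolding monochromatic_def by blast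
      moreover have "f p < k" "f q < k"
        using pq f e' assms(1) by (auto simp: is_coloring_def hypergraph_def)
      ultimately show ?thesis unfolding monochromatic_def by (cases "p = u"; cases "q = u") auto
    qed
  qed (use f in \<open>auto simp: is_coloring_def\<close>)
  then show ?thesis by (auto simp: colorable_iff_is_coloring)
qed

lemma criticalI:
  assumes "hypergraph G" "\<not> colorable G k"
    and delete_edge: "\<forall>e\<in>edges G. colorable (verts G, edges G - {e}) k"
    and no_isolated: "\<forall>x\<in>verts G. \<exists>e\<in>edges G. x \<in> e"
  shows "critical (k + 1) G"
proof -
  have "edges G \<noteq> {}"
  proof
    assume "edges G = {}"
    then have "is_coloring G k f" for f using no_isolated by (simp add: is_coloring_def)
    then show False using assms(2) by (auto simp: colorable_iff_is_coloring)
  qed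
  then obtain e where e: "e \<in> edges G" by blast
  have "chi G = k + 1"
    using chi_eq_Suc[OF colorable_Suc_if_delete_edge[OF assms(1) e bspec[OF delete_edge e]] assms(2)] .
  moreover have "chi H < k + 1" if H: "subhypergraph H G" "H \<noteq> G" for H
  proof -
    have "colorable H k"
    proof (cases "edges H = edges G")
      case True
      then have "verts H \<noteq> verts G" using H(2) by (metis prod.collapse)
      then obtain x where x: "x \<in> verts G" "x \<notin> verts H" using H(1) by (auto simp: subhypergraph_def)
      then obtain e' where "e' \<in> edges H" "x \<in> e'" using no_isolated True by blast
      then have False using x H(1) by (auto simp: subhypergraph_def hypergraph_def)
      then show ?thesis ..
    next
      case False
      then obtain e' where e': "e' \<in> edges G" "e' \<notin> edges H"
        using H(1) by (auto simp: subhypergraph_def)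
      then obtain f where "is_coloring (verts G, edges G - {e'}) k f"
        using delete_edge by (auto simp: colorable_iff_is_coloring)
      then have "is_coloring H k f"
        by (rule is_coloring_mono) (use H(1) e' in \<open>auto simp: subhypergraph_def\<close>)
      then show ?thesis by (auto simp: colorable_iff_is_coloring)
    qed
    then have "chi H \<le> k" unfolding chi_def by (rule Least_le)
    then show ?thesis by simp
  qed
  ultimately show ?thesis using assms(1) by (simp add: critical_def)
qed

lemma hypergraph_induced: "hypergraph G \<Longrightarrow> X \<subseteq> verts G \<Longrightarrow> hypergraph (induced G X)"
  unfolding hypergraph_def induced_def by (auto intro: finite_subset)

locale hypergraph_splitting =
  fixes G1 G2 :: "'a hypergraph" and et :: "'a set" and v :: 'a and s :: "'a set \<Rightarrow> 'a set"
  assumes hypergraph1: "hypergraph G1" and hypergraph2: "hypergraph G2"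
    and disjoint: "verts G1 \<inter> verts G2 = {}"
    and et_edge: "et \<in> edges G1" and v_vert: "v \<in> verts G2"
    and admissible: "admissible et G2 v s"
begin

abbreviation G :: "'a hypergraph" where "G \<equiv> splitting G1 et G2 v s"

definition V2' :: "'a set" where "V2' = (verts G2 - {v}) \<union> et"

definition split_edge :: "'a set \<Rightarrow> 'a set" where
  "split_edge e = (if v \<in> e then (e - {v}) \<union> s e else e)"

definition collapse :: "'a \<Rightarrow> 'a" where "collapse x = (if x \<in> et then v else x)"

lemma et_subset: "et \<subseteq> verts G1"
  using hypergraph1 et_edge by (auto simp: hypergraph_def)

lemma card_et: "2 \<le> card et"
  using hypergraph1 et_edge by (auto simp: hypergraph_def)

lemma edge2_subset: "e \<in> edges G2 \<Longrightarrow> e \<subseteq> verts G2"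
  using hypergraph2 by (auto simp: hypergraph_def)

lemma s_subset: "e \<in> edges G2 \<Longrightarrow> v \<in> e \<Longrightarrow> s e \<subseteq> et"
  and s_nonempty: "e \<in> edges G2 \<Longrightarrow> v \<in> e \<Longrightarrow> s e \<noteq> {}"
  using admissible by (auto simp: admissible_def incident_def)

lemma et_subset_V2': "et \<subseteq> V2'"
  by (simp add: V2'_def)

lemma inter_V2': "verts G1 \<inter> V2' = et"
  using disjoint et_subset by (auto simp: V2'_def)

lemma card_V2': "card V2' = card (verts G2) - 1 + card et"
proof -
  have "finite (verts G2)" "finite et"
    using hypergraph1 hypergraph2 et_subset by (auto simp: hypergraph_def intro: finite_subset)
  moreover have "(verts G2 - {v}) \<inter> et = {}" using disjoint et_subset by blast
  ultimately show ?thesis by (simp add: V2'_def card_Un_disjoint card_Diff_singleton v_vert)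
qed

lemma edges_splitting: "edges G = (edges G1 - {et}) \<union> split_edge ` edges G2"
  by (auto simp: splitting_def incident_def split_edge_def image_iff)

lemma verts_splitting: "verts G = verts G1 \<union> V2'"
  using et_subset by (auto simp: splitting_def V2'_def)

lemma split_edge_subset: "e \<in> edges G2 \<Longrightarrow> split_edge e \<subseteq> V2'"
  using edge2_subset s_subset by (auto simp: split_edge_def V2'_def)

text \<open>Contracting \<open>et\<close> back onto \<open>v\<close> undoes the splitting on every edge of \<open>G2\<close>; every
  transfer of colourings between \<open>G2\<close> and the \<open>G2\<close>-side of \<open>G\<close> rests on this.\<close>
lemma collapse_split_edge:
  assumes "e \<in> edges G2" shows "collapse ` split_edge e = e"
proof -
  have "e \<inter> et = {}" using edge2_subset[OF assms] et_subset disjoint by blast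
  then show ?thesis
    using s_subset[OF assms] s_nonempty[OF assms]
    by (auto simp: split_edge_def collapse_def image_Un image_constant_conv)
qed

lemma finite_V2': "finite V2'"
  using hypergraph1 hypergraph2 et_subset by (auto simp: hypergraph_def V2'_def intro: finite_subset)

lemma card_split_edge: "e \<in> edges G2 \<Longrightarrow> 2 \<le> card (split_edge e)"
  using card_image_le[OF finite_subset[OF split_edge_subset finite_V2'], of _ collapse]
    collapse_split_edge hypergraph2 by (force simp: hypergraph_def)

lemma hypergraph_splitting: "hypergraph G"
  unfolding hypergraph_def
proof (intro conjI ballI)
  show "finite (verts G)" using hypergraph1 finite_V2' by (simp add: verts_splitting hypergraph_def)
  show "edges G \<subseteq> Pow (verts G)"
    using hypergraph1 split_edge_subset by (auto simp: edges_splitting verts_splitting hypergraph_def)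
  show "2 \<le> card e" if "e \<in> edges G" for e
    using that hypergraph1 card_split_edge by (auto simp: edges_splitting hypergraph_def)
qed

lemma monochromatic_split_edge:
  assumes "e \<in> edges G2" "\<And>x. x \<in> split_edge e \<Longrightarrow> h x = f (collapse x)"
  shows "monochromatic h (split_edge e) \<longleftrightarrow> monochromatic f e"
  using monochromatic_cong[of "split_edge e" h "f \<circ> collapse"] assms
  by (simp add: monochromatic_comp collapse_split_edge)

lemma is_coloring_collapse:
  assumes "D \<subseteq> edges G2" "is_coloring (verts G2, D) k f"
  shows "is_coloring (V2', split_edge ` D) k (f \<circ> collapse)"
  unfolding is_coloring_def
proof (intro conjI ballI)
  show "(f \<circ> collapse) x < k" if "x \<in> verts (V2', split_edge ` D)" for x
    using that assms(2) v_vert by (auto simp: is_coloring_def V2'_def collapse_def)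
  fix e' assume "e' \<in> edges (V2', split_edge ` D)"
  then obtain e where e: "e \<in> D" "e' = split_edge e" by auto
  then have "monochromatic (f \<circ> collapse) e' \<longleftrightarrow> monochromatic f e"
    using assms(1) by (auto intro!: monochromatic_split_edge)
  then show "\<not> monochromatic (f \<circ> collapse) e'" using e assms(2) by (auto simp: is_coloring_def)
qed

lemma colorable_G2_if_monochromatic_et:
  assumes h: "is_coloring (V2', split_edge ` edges G2) k h" and mono: "monochromatic h et"
  shows "colorable G2 k"
proof -
  obtain a where a: "a \<in> et" using card_ge_2_obtain[OF card_et] by blast
  have agree: "h x = (h(v := h a)) (collapse x)" if "x \<in> V2'" for x
  proof (cases "x \<in> et")
    case True
    moreover have "h x = h a" using True a mono unfolding monochromatic_def by blast
    ultimately show ?thesis by (simp add: collapse_def)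
  next
    case False
    then show ?thesis using that by (simp add: collapse_def V2'_def)
  qed
  have "is_coloring G2 k (h(v := h a))"
    unfolding is_coloring_def
  proof (intro conjI ballI)
    show "(h(v := h a)) x < k" if "x \<in> verts G2" for x
      using that a h by (auto simp: is_coloring_def V2'_def)
    fix e assume e: "e \<in> edges G2"
    have "monochromatic h (split_edge e) \<longleftrightarrow> monochromatic (h(v := h a)) e"
      using split_edge_subset[OF e] agree by (intro monochromatic_split_edge[OF e]) auto
    then show "\<not> monochromatic (h(v := h a)) e" using h e by (auto simp: is_coloring_def)
  qed
  then show ?thesis by (auto simp: colorable_iff_is_coloring)
qed

lemma not_colorable_splitting:
  assumes "\<not> colorable G1 k" "\<not> colorable G2 k" shows "\<not> colorable G k"
proof
  assume "colorable G k"
  then obtain h where h: "is_coloring G k h" by (auto simp: colorable_iff_is_coloring)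
  have "is_coloring (verts G1, edges G1 - {et}) k h"
    using h by (rule is_coloring_mono) (auto simp: verts_splitting edges_splitting)
  then have "monochromatic h et" by (rule monochromatic_deleted_edge[OF assms(1)])
  moreover have "is_coloring (V2', split_edge ` edges G2) k h"
    using h by (rule is_coloring_mono) (auto simp: verts_splitting edges_splitting)
  ultimately show False using colorable_G2_if_monochromatic_et assms(2) by blast
qed

lemma no_isolated_splitting:
  assumes "\<forall>x\<in>verts G1. \<exists>e\<in>edges G1. x \<in> e" "\<forall>x\<in>verts G2. \<exists>e\<in>edges G2. x \<in> e"
  shows "\<forall>x\<in>verts G. \<exists>e\<in>edges G. x \<in> e"
proof
  fix x assume "x \<in> verts G"
  then consider "x \<in> verts G1" | "x \<in> verts G2" "x \<noteq> v" by (auto simp: splitting_def)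
  then show "\<exists>e\<in>edges G. x \<in> e"
  proof cases
    case 1
    then obtain e where e: "e \<in> edges G1" "x \<in> e" using assms(1) by blast
    show ?thesis
    proof (cases "e = et")
      case True
      then obtain e' where "e' \<in> edges G2" "v \<in> e'" "x \<in> s e'"
        using admissible e(2) by (auto simp: admissible_def incident_def)
      then show ?thesis by (auto simp: edges_splitting split_edge_def)
    next
      case False
      then show ?thesis using e by (auto simp: edges_splitting)
    qed
  next
    case 2
    then obtain e where "e \<in> edges G2" "x \<in> e" using assms(2) by blast
    then have "split_edge e \<in> edges G" "x \<in> split_edge e"
      using 2 by (auto simp: edges_splitting split_edge_def)
    then show ?thesis by blast
  qed
qed

lemma separating_splitting:
  assumes "card et < card (verts G1)" "card et < card V2'"
  shows "separating G et"
  unfolding separating_def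
proof (intro exI conjI)
  have "e \<subseteq> verts G1 \<or> e \<subseteq> V2'" if "e \<in> edges G" for e
    using that hypergraph1 split_edge_subset by (auto simp: edges_splitting hypergraph_def)
  then show "edges G = edges (induced G (verts G1)) \<union> edges (induced G V2')"
    by (auto simp: induced_def)
  show "verts G1 \<inter> V2' = et" by (rule inter_V2')
qed (use assms in \<open>auto simp: verts_splitting\<close>)

lemma colorable_delete_G1_edge:
  assumes "card et = 2" and e0: "e0 \<in> edges G1" "e0 \<noteq> et"
    and f: "is_coloring (verts G1, edges G1 - {e0}) k f"
    and g: "is_coloring (V2', split_edge ` edges G2) k g" "\<not> monochromatic g et"
  shows "colorable (verts G, edges G - {e0}) k"
proof -
  obtain a b where ab: "et = {a, b}" "a \<noteq> b" using assms(1) by (meson card_2_iff)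
  have "et \<in> edges G1 - {e0}" using e0 et_edge by blast
  then have "\<not> monochromatic f et" using f by (simp add: is_coloring_def)
  then have fab: "f a \<noteq> f b" by (simp add: ab monochromatic_doubleton)
  have gab: "g a \<noteq> g b" using g(2) by (simp add: ab monochromatic_doubleton)
  have "a \<in> et" "b \<in> et" using ab(1) by auto
  then have bounds: "g a < k" "g b < k" "f a < k" "f b < k"
    using f g(1) et_subset et_subset_V2' unfolding is_coloring_def by auto
  obtain \<pi> where \<pi>: "inj \<pi>" "\<pi> ` {..<k} \<subseteq> {..<k}" "\<pi> (g a) = f a" "\<pi> (g b) = f b"
    using exists_color_permutation[OF bounds gab fab] by blast
  have "is_coloring (verts G1 \<union> V2', (edges G1 - {et} - {e0}) \<union> split_edge ` edges G2) k
      (\<lambda>x. if x \<in> verts G1 then f x else (\<pi> \<circ> g) x)"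
  proof (rule is_coloring_Un)
    show "is_coloring (verts G1, edges G1 - {et} - {e0}) k f" using f by (rule is_coloring_mono) auto
    show "is_coloring (V2', split_edge ` edges G2) k (\<pi> \<circ> g)"
      using g(1) \<pi>(1,2) by (rule is_coloring_relabel)
    show "edges G1 - {et} - {e0} \<subseteq> Pow (verts G1)" using hypergraph1 by (auto simp: hypergraph_def)
    show "split_edge ` edges G2 \<subseteq> Pow V2'" using split_edge_subset by auto
    show "\<forall>x\<in>verts G1 \<inter> V2'. f x = (\<pi> \<circ> g) x"
      unfolding inter_V2' unfolding ab using \<pi>(3,4) by auto
  qed
  then have "is_coloring (verts G, edges G - {e0}) k (\<lambda>x. if x \<in> verts G1 then f x else (\<pi> \<circ> g) x)"
    by (rule is_coloring_mono) (auto simp: verts_splitting edges_splitting)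
  then show ?thesis by (auto simp: colorable_iff_is_coloring)
qed

lemma colorable_delete_split_edge:
  assumes e2: "e2 \<in> edges G2" and f: "is_coloring (verts G2, edges G2 - {e2}) k f"
    and f0: "is_coloring (verts G1, edges G1 - {et}) k f0" "monochromatic f0 et"
  shows "colorable (verts G, edges G - {split_edge e2}) k"
proof -
  obtain a where a: "a \<in> et" using card_ge_2_obtain[OF card_et] by blast
  have "f v < k" "f0 a < k" using f f0(1) v_vert a et_subset by (auto simp: is_coloring_def)
  then obtain \<pi> where \<pi>: "inj \<pi>" "\<pi> ` {..<k} \<subseteq> {..<k}" "\<pi> (f v) = f0 a"
    by (rule exists_color_transposition)
  define h2 where "h2 = \<pi> \<circ> (f \<circ> collapse)"
  have "is_coloring (V2', split_edge ` (edges G2 - {e2})) k (f \<circ> collapse)"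
    using f by (intro is_coloring_collapse) auto
  then have h2: "is_coloring (V2', split_edge ` (edges G2 - {e2})) k h2"
    unfolding h2_def using \<pi>(1,2) by (rule is_coloring_relabel)
  have "f0 x = h2 x" if "x \<in> verts G1 \<inter> V2'" for x
  proof -
    have "x \<in> et" using that by (simp add: inter_V2')
    then have "f0 x = f0 a" using a f0(2) unfolding monochromatic_def by blast
    then show ?thesis using \<open>x \<in> et\<close> \<pi>(3) by (simp add: h2_def collapse_def)
  qed
  then have "is_coloring (verts G1 \<union> V2', (edges G1 - {et}) \<union> split_edge ` (edges G2 - {e2})) k
      (\<lambda>x. if x \<in> verts G1 then f0 x else h2 x)"
    using f0(1) h2 hypergraph1 split_edge_subset
    by (intro is_coloring_Un) (auto simp: hypergraph_def)
  then have "is_coloring (verts G, edges G - {split_edge e2}) k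
      (\<lambda>x. if x \<in> verts G1 then f0 x else h2 x)"
    by (rule is_coloring_mono) (auto simp: verts_splitting edges_splitting)
  then show ?thesis by (auto simp: colorable_iff_is_coloring)
qed

lemma critical_splitting:
  assumes "k \<ge> 1" "critical (k + 1) G1" "critical (k + 1) G2" "card et = 2"
    and "colorable (induced G V2') k"
  shows "critical (k + 1) G"
proof (rule criticalI)
  obtain g where "is_coloring (induced G V2') k g"
    using assms(5) by (auto simp: colorable_iff_is_coloring)
  then have g: "is_coloring (V2', split_edge ` edges G2) k g"
    by (rule is_coloring_mono) (use split_edge_subset in \<open>auto simp: induced_def edges_splitting\<close>)
  then have g_et: "\<not> monochromatic g et"
    using colorable_G2_if_monochromatic_et critical_not_colorable[OF assms(3)] by blast
  show "\<forall>e\<in>edges G. colorable (verts G, edges G - {e}) k"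
  proof
    fix e0 assume "e0 \<in> edges G"
    then consider "e0 \<in> edges G1" "e0 \<noteq> et" | e2 where "e2 \<in> edges G2" "e0 = split_edge e2"
      unfolding edges_splitting by blast
    then show "colorable (verts G, edges G - {e0}) k"
    proof cases
      case 1
      obtain f where "is_coloring (verts G1, edges G1 - {e0}) k f"
        using critical_delete_edge_colorable[OF assms(2) 1(1)] colorable_iff_is_coloring by blast
      then show ?thesis by (rule colorable_delete_G1_edge[OF assms(4) 1 _ g g_et])
    next
      case (2 e2)
      obtain f where f: "is_coloring (verts G2, edges G2 - {e2}) k f"
        using critical_delete_edge_colorable[OF assms(3) 2(1)] colorable_iff_is_coloring by blast
      obtain f0 where f0: "is_coloring (verts G1, edges G1 - {et}) k f0"
        using critical_delete_edge_colorable[OF assms(2) et_edge] colorable_iff_is_coloring by blast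
      then have "monochromatic f0 et"
        by (rule monochromatic_deleted_edge[OF critical_not_colorable[OF assms(2)]])
      then show ?thesis using colorable_delete_split_edge[OF 2(1) f f0] 2(2) by simp
    qed
  qed
  show "\<forall>x\<in>verts G. \<exists>e\<in>edges G. x \<in> e"
    using critical_no_isolated[OF assms(2,1)] critical_no_isolated[OF assms(3,1)]
    by (intro no_isolated_splitting ballI)
  show "\<not> colorable G k"
    using not_colorable_splitting critical_not_colorable[OF assms(2)] critical_not_colorable[OF assms(3)] .
qed (fact hypergraph_splitting)

end

theorem theorem16:
  fixes G1 G2 :: "'a hypergraph" and et :: "'a set" and v :: 'a
    and s :: "'a set \<Rightarrow> 'a set" and k :: nat
  assumes "k \<ge> 2"
    and "critical (k + 1) G1" and "critical (k + 1) G2"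
    and "verts G1 \<inter> verts G2 = {}"
    and "et \<in> edges G1" and "card et = 2"
    and "v \<in> verts G2"
    and "admissible et G2 v s"
    and "chi (induced (splitting G1 et G2 v s) ((verts G2 - {v}) \<union> et)) \<le> k"
  shows "critical (k + 1) (splitting G1 et G2 v s)
    \<and> separating (splitting G1 et G2 v s) et \<and> card et = 2"
proof -
  interpret hypergraph_splitting G1 G2 et v s
    using assms(2-5,7,8) by unfold_locales (auto simp: critical_def)
  have "colorable (induced G V2') k"
    using hypergraph_induced[OF hypergraph_splitting] assms(9)
    by (intro colorable_if_chi_le) (auto simp: V2'_def verts_splitting)
  then have "critical (k + 1) G"
    using assms(1-3,6) by (intro critical_splitting) auto
  moreover have "separating G et"
  proof (rule separating_splitting)
    show "card et < card (verts G1)" using critical_card_verts[OF assms(2)] assms(1,6) by simp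
    show "card et < card V2'" using critical_card_verts[OF assms(3)] assms(1,6) by (simp add: card_V2')
  qed
  ultimately show ?thesis using assms(6) by blast
qed

end
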